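(* Let $M\subset \bigoplus_{i=1}^r A[-\delta_i]$ be a graded right $A$-submodule, and let $\delta'_i$ be integers with $\delta_i\ge\delta'_i\ge 0$. Put $\bar M=H(M)\subset\bigoplus_{i=1}^r \bar A[-\delta'_i]$ and $\bar M' = \bar M\cap \bigoplus_{i} t^{\delta_i-\delta'_i}A[-\delta_i]$, where $\bigoplus_i t^{\delta_i-\delta'_i}A[-\delta_i]$ denotes the set of elements $\sum_i \bar e_i\, t^{\delta_i-\delta'_i} a_i$ with $a_i\in A$. Then $\eta(M)=\bar M'$. In particular $\dim_{\mathbb K} M_d=\dim_{\mathbb K}\bar M'_d$ for all $d\ge 0$.
   Context: Let $\mathbb K$ be a field and $F=\mathbb K\langle x_1,\dots,x_n\rangle$ the free associative algebra with the standard grading ($\deg x_i=1$). Let $I\subset F$ be a graded two-sided ideal and $A=F/I$. For an integer $\delta\ge0$, $A[-\delta]$ denotes $A$ with shifted grading $A[-\delta]_d=A_{d-\delta}$ (and $0$ for $d<\delta$). $\bigoplus_{i=1}^r A[-\delta_i]$ is the graded free right $A$-module with canonical basis $e_1,\dots,e_r$, $\deg e_i=\delta_i$. A right submodule $M$ is graded if it is the sum of its homogeneous components $M_d$. Let $t$ be a new variable, $\bar F=\mathbb K\langle x_1,\dots,x_n,t\rangle$ with standard grading, $\bar I$ the two-sided ideal of $\bar F$ generated by $I$, and $\bar A=\bar F/\bar I$; $A$ embeds canonically in $\bar A$. For integers $\delta_i\ge\delta'_i\ge0$, $\bigoplus_i\bar A[-\delta'_i]$ is the graded free right $\bar A$-module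 with canonical basis $\bar e_i$, $\deg\bar e_i=\delta'_i$, and $\eta:\bigoplus_i A[-\delta_i]\to\bigoplus_i\bar A[-\delta'_i]$ is the injective graded right $A$-module homomorphism $e_i\mapsto \bar e_i t^{\delta_i-\delta'_i}$. For a graded right $A$-submodule $M$, the component homogenization $H(M)$ is the right $\bar A$-submodule of $\bigoplus_i\bar A[-\delta'_i]$ generated by $\eta(M)$. *)

theory Defs
  imports "HOL-Library.Poly_Mapping" "HOL-Library.Extended_Nat"
begin

datatype 'x word = Wd "'x list"

fun wlen :: "'x word \<Rightarrow> nat" where "wlen (Wd u) = length u"

instantiation word :: (type) monoid_add
begin
definition zero_word :: "'x word" where "zero_word = Wd []"
fun plus_word :: "'x word \<Rightarrow> 'x word \<Rightarrow> 'x word" where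
  "plus_word (Wd u) (Wd v) = Wd (u @ v)"
instance
proof
  fix a b c :: "'x word"
  show "a + b + c = a + (b + c)" by (cases a; cases b; cases c) simp_all
  show "0 + a = a" by (cases a) (simp add: zero_word_def)
  show "a + 0 = a" by (cases a) (simp add: zero_word_def)
qed
end

text \<open>Noncommutative polynomials: finitely supported functions words => K.
  The product is the convolution over concatenation of words (Poly_Mapping).\<close>
type_synonym ('x, 'k) ncpoly = "'x word \<Rightarrow>\<^sub>0 'k"

definition hom :: "nat \<Rightarrow> ('x, 'k::zero) ncpoly \<Rightarrow> bool" where
  "hom d p \<longleftrightarrow> (\<forall>w\<in>Poly_Mapping.keys p. wlen w = d)"

definition twosided_ideal :: "('x, 'k::ring_1) ncpoly set \<Rightarrow> bool" where
  "twosided_ideal J \<longleftrightarrow> 0 \<in> J \<and> (\<forall>p\<in>J. \<forall>q\<in>J. p + q \<in> J) \<and> (\<forall>p\<in>J. - p \<in> J)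
     \<and> (\<forall>p\<in>J. \<forall>a b. a * p * b \<in> J)"

definition hcomp :: "nat \<Rightarrow> ('x, 'k::zero) ncpoly \<Rightarrow> ('x, 'k) ncpoly" where
  "hcomp d p = Abs_poly_mapping (\<lambda>w. if wlen w = d then Poly_Mapping.lookup p w else 0)"

definition graded_ideal :: "('x, 'k::ring_1) ncpoly set \<Rightarrow> bool" where
  "graded_ideal J \<longleftrightarrow> twosided_ideal J \<and> (\<forall>p\<in>J. \<forall>d. hcomp d p \<in> J)"

definition gen_ideal :: "('x, 'k::ring_1) ncpoly set \<Rightarrow> ('x, 'k) ncpoly set" where
  "gen_ideal S = \<Inter>{J. twosided_ideal J \<and> S \<subseteq> J}"

definition smult :: "'k::ring_1 \<Rightarrow> ('x, 'k) ncpoly \<Rightarrow> ('x, 'k) ncpoly" where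
  "smult c p = Poly_Mapping.single 0 c * p"

section \<open>Adjoining the variable t: letters 'x option, with t = None, x_i = Some x_i\<close>

definition emb :: "('x, 'k::ring_1) ncpoly \<Rightarrow> ('x option, 'k) ncpoly" where
  "emb p = (\<Sum>w\<in>Poly_Mapping.keys p. Poly_Mapping.single (case w of Wd u \<Rightarrow> Wd (map Some u)) (Poly_Mapping.lookup p w))"

definition tpow :: "nat \<Rightarrow> ('x option, 'k::ring_1) ncpoly" where
  "tpow k = Poly_Mapping.single (Wd (replicate k None)) 1"

text \<open>An element of the free module (F/J)^r (basis indexed by the type 'r) is the class of a
  representative vector v : 'r => F, i.e. the coset v + J^r.\<close>
definition qv :: "('y, 'k::ring_1) ncpoly set \<Rightarrow> ('r \<Rightarrow> ('y, 'k) ncpoly) \<Rightarrow> ('r \<Rightarrow> ('y, 'k) ncpoly) set" where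
  "qv J v = {w. \<forall>i. w i - v i \<in> J}"

definition qadd :: "('y, 'k::ring_1) ncpoly set \<Rightarrow> ('r \<Rightarrow> ('y, 'k) ncpoly) set
    \<Rightarrow> ('r \<Rightarrow> ('y, 'k) ncpoly) set \<Rightarrow> ('r \<Rightarrow> ('y, 'k) ncpoly) set" where
  "qadd J X Y = \<Union>{qv J (\<lambda>i. x i + y i) | x y. x \<in> X \<and> y \<in> Y}"

definition qrmult :: "('y, 'k::ring_1) ncpoly set \<Rightarrow> ('r \<Rightarrow> ('y, 'k) ncpoly) set
    \<Rightarrow> ('y, 'k) ncpoly \<Rightarrow> ('r \<Rightarrow> ('y, 'k) ncpoly) set" where
  "qrmult J X p = \<Union>{qv J (\<lambda>i. x i * p) | x. x \<in> X}"

definition rsubmod :: "('y, 'k::ring_1) ncpoly set \<Rightarrow> ('r \<Rightarrow> ('y, 'k) ncpoly) set set \<Rightarrow> bool" where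
  "rsubmod J N \<longleftrightarrow> N \<subseteq> range (qv J) \<and> qv J (\<lambda>i. 0) \<in> N \<and> (\<forall>X\<in>N. \<forall>Y\<in>N. qadd J X Y \<in> N)
     \<and> (\<forall>X\<in>N. \<forall>p. qrmult J X p \<in> N)"

definition gen_rsubmod :: "('y, 'k::ring_1) ncpoly set \<Rightarrow> ('r \<Rightarrow> ('y, 'k) ncpoly) set set
    \<Rightarrow> ('r \<Rightarrow> ('y, 'k) ncpoly) set set" where
  "gen_rsubmod J S = \<Inter>{N. rsubmod J N \<and> S \<subseteq> N}"

text \<open>Grading of the shifted free module with deg e_i = \<delta> i: a representative vector
  is homogeneous of degree d if its i-th entry is homogeneous of degree d - \<delta> i
  (and is 0 when d < \<delta> i).\<close>
definition homv :: "('r \<Rightarrow> nat) \<Rightarrow> nat \<Rightarrow> ('r \<Rightarrow> ('y, 'k::zero) ncpoly) \<Rightarrow> bool" where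
  "homv \<delta> d v \<longleftrightarrow> (\<forall>i. if \<delta> i \<le> d then hom (d - \<delta> i) (v i) else v i = 0)"

definition hpart :: "('y, 'k::ring_1) ncpoly set \<Rightarrow> ('r \<Rightarrow> nat) \<Rightarrow> nat
    \<Rightarrow> ('r \<Rightarrow> ('y, 'k) ncpoly) set set \<Rightarrow> ('r \<Rightarrow> ('y, 'k) ncpoly) set set" where
  "hpart J \<delta> d N = {X\<in>N. \<exists>v. homv \<delta> d v \<and> X = qv J v}"

definition graded_rsubmod :: "('y, 'k::ring_1) ncpoly set \<Rightarrow> ('r \<Rightarrow> nat)
    \<Rightarrow> ('r \<Rightarrow> ('y, 'k) ncpoly) set set \<Rightarrow> bool" where
  "graded_rsubmod J \<delta> N \<longleftrightarrow> rsubmod J N \<and>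
     (\<forall>X\<in>N. \<exists>D y. finite D \<and> (\<forall>d\<in>D. homv \<delta> d (y d) \<and> qv J (y d) \<in> N)
        \<and> X = qv J (\<lambda>i. \<Sum>d\<in>D. y d i))"

definition qindep :: "('y, 'k::ring_1) ncpoly set \<Rightarrow> (nat \<Rightarrow> ('r \<Rightarrow> ('y, 'k) ncpoly) set) \<Rightarrow> nat \<Rightarrow> bool" where
  "qindep J Xs k \<longleftrightarrow> (\<forall>x c. (\<forall>j<k. x j \<in> Xs j) \<longrightarrow>
      qv J (\<lambda>i. \<Sum>j<k. smult (c j) (x j i)) = qv J (\<lambda>i. 0) \<longrightarrow> (\<forall>j<k. c j = 0))"

definition qdim :: "('y, 'k::ring_1) ncpoly set \<Rightarrow> ('r \<Rightarrow> ('y, 'k) ncpoly) set set \<Rightarrow> enat" where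
  "qdim J S = Sup {enat k | k. \<exists>Xs. (\<forall>j<k. Xs j \<in> S) \<and> qindep J Xs k}"

text \<open>eta : (+)_i A[-\<delta>_i] -> (+)_i Abar[-\<delta>'_i], e_i |-> ebar_i t^(\<delta> i - \<delta>' i), applied to
  elements (classes mod I^r), with values classes mod Ibar^r.\<close>
definition eta :: "('x, 'k::ring_1) ncpoly set \<Rightarrow> ('r \<Rightarrow> nat) \<Rightarrow> ('r \<Rightarrow> nat)
    \<Rightarrow> ('r \<Rightarrow> ('x, 'k) ncpoly) set \<Rightarrow> ('r \<Rightarrow> ('x option, 'k) ncpoly) set" where
  "eta I \<delta> \<delta>' X = \<Union>{qv (gen_ideal (emb ` I)) (\<lambda>i. tpow (\<delta> i - \<delta>' i) * emb (x i)) | x. x \<in> X}"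

definition Hhom :: "('x, 'k::ring_1) ncpoly set \<Rightarrow> ('r \<Rightarrow> nat) \<Rightarrow> ('r \<Rightarrow> nat)
    \<Rightarrow> ('r \<Rightarrow> ('x, 'k) ncpoly) set set \<Rightarrow> ('r \<Rightarrow> ('x option, 'k) ncpoly) set set" where
  "Hhom I \<delta> \<delta>' M = gen_rsubmod (gen_ideal (emb ` I)) (eta I \<delta> \<delta>' ` M)"

definition tA :: "('x, 'k::ring_1) ncpoly set \<Rightarrow> ('r \<Rightarrow> nat) \<Rightarrow> ('r \<Rightarrow> nat)
    \<Rightarrow> ('r \<Rightarrow> ('x option, 'k) ncpoly) set set" where
  "tA I \<delta> \<delta>' = {qv (gen_ideal (emb ` I)) (\<lambda>i. tpow (\<delta> i - \<delta>' i) * emb (a i)) | a. True}"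

end

theory Submission
  imports Defs
begin

text \<open>Setting \<open>t = 1\<close> is a ring homomorphism \<open>dehom\<close> from \<open>K\<langle>x, t\<rangle>\<close> onto \<open>K\<langle>x\<rangle>\<close> which maps
  \<open>Ibar\<close> into \<open>I\<close> and inverts \<open>\<eta>\<close> on elements of the form \<open>(ebar\<^sub>i t\<^bsup>\<delta>\<^sub>i - \<delta>'\<^sub>i\<^esup> a\<^sub>i)\<^sub>i\<close>.
  Hence the preimage of \<open>M\<close> under \<open>dehom\<close> is an \<open>Abar\<close>-submodule containing \<open>\<eta>(M)\<close>, so it
  contains \<open>H(M)\<close>, and every element of \<open>H(M)\<close> of that form comes from \<open>M\<close>.

  For the dimensions: \<open>t\<^sup>c a \<in> Ibar\<close> iff \<open>a \<in> I\<close>, so \<open>\<eta>\<close> preserves linear independence in both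
  directions, and it remains to see that \<open>\<eta>\<close> maps \<open>M\<^sub>d\<close> onto the degree \<open>d\<close> part of \<open>\<eta>(M)\<close>.
  Since \<open>I\<close> is graded, the degree \<open>m\<close> component of an element of \<open>Ibar\<close> still dehomogenizes into
  \<open>I\<close>; so if \<open>\<eta>(x)\<close> is congruent to a homogeneous element of degree \<open>d\<close>, all homogeneous
  components of \<open>x\<close> of the wrong degree lie in \<open>I\<close>.\<close>

definition push_keys :: "('a \<Rightarrow> 'b) \<Rightarrow> ('a \<Rightarrow>\<^sub>0 'k::comm_monoid_add) \<Rightarrow> 'b \<Rightarrow>\<^sub>0 'k" where
  "push_keys f p = (\<Sum>w\<in>Poly_Mapping.keys p. Poly_Mapping.single (f w) (Poly_Mapping.lookup p w))"

lemma push_keys_eq_sum_superset: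
  assumes "finite S" "Poly_Mapping.keys p \<subseteq> S"
  shows "push_keys f p = (\<Sum>w\<in>S. Poly_Mapping.single (f w) (Poly_Mapping.lookup p w))"
  unfolding push_keys_def
  by (rule sum.mono_neutral_left) (use assms in \<open>auto simp: in_keys_iff\<close>)

lemma push_keys_zero [simp]: "push_keys f 0 = 0"
  by (simp add: push_keys_def)

lemma push_keys_single [simp]:
  "push_keys f (Poly_Mapping.single w c) = Poly_Mapping.single (f w) c"
  by (simp add: push_keys_def)

lemma push_keys_add: "push_keys f (p + q) = push_keys f p + push_keys f q"
proof -
  let ?S = "Poly_Mapping.keys p \<union> Poly_Mapping.keys q"
  have "Poly_Mapping.keys (p + q) \<subseteq> ?S" by (rule keys_add)
  then show ?thesis
    by (simp add: push_keys_eq_sum_superset[of ?S] lookup_add single_add sum.distrib)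
qed

lemma push_keys_sum: "push_keys f (\<Sum>j\<in>A. g j) = (\<Sum>j\<in>A. push_keys f (g j))"
  by (induction A rule: infinite_finite_induct) (auto simp: push_keys_add)

lemma push_keys_uminus: "push_keys f (- p) = - push_keys f (p :: 'a \<Rightarrow>\<^sub>0 'k::ab_group_add)"
  by (metis neg_eq_iff_add_eq_0 push_keys_add push_keys_zero)

lemma push_keys_diff:
  "push_keys f (p - q) = push_keys f p - push_keys f (q :: 'a \<Rightarrow>\<^sub>0 'k::ab_group_add)"
  by (simp only: diff_conv_add_uminus push_keys_add push_keys_uminus)

lemma poly_mapping_sum_single:
  "p = (\<Sum>w\<in>Poly_Mapping.keys p. Poly_Mapping.single w (Poly_Mapping.lookup p w))"
  by (rule poly_mapping_eqI)
     (simp add: lookup_sum lookup_single when_def in_keys_iff cong: if_cong)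

lemma push_keys_id: "push_keys id p = p"
  unfolding push_keys_def by (simp flip: poly_mapping_sum_single)

lemma push_keys_comp: "push_keys g (push_keys f p) = push_keys (g \<circ> f) p"
  by (simp add: push_keys_def[of f] push_keys_sum) (simp add: push_keys_def)

lemma keys_push_keys: "Poly_Mapping.keys (push_keys f p) \<subseteq> f ` Poly_Mapping.keys p"
proof -
  have "Poly_Mapping.keys (push_keys f p) \<subseteq> (\<Union>w\<in>Poly_Mapping.keys p.
      Poly_Mapping.keys (Poly_Mapping.single (f w) (Poly_Mapping.lookup p w)))"
    unfolding push_keys_def by (rule keys_sum)
  then show ?thesis by auto
qed

lemma times_poly_mapping_sum_single:
  "p * q = (\<Sum>v\<in>Poly_Mapping.keys q. \<Sum>u\<in>Poly_Mapping.keys p.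
     Poly_Mapping.single (u + v) (Poly_Mapping.lookup p u * Poly_Mapping.lookup q v))"
proof -
  have "p * q = (\<Sum>u\<in>Poly_Mapping.keys p. Poly_Mapping.single u (Poly_Mapping.lookup p u))
      * (\<Sum>v\<in>Poly_Mapping.keys q. Poly_Mapping.single v (Poly_Mapping.lookup q v))"
    by (simp only: flip: poly_mapping_sum_single)
  then show ?thesis
    by (simp add: sum_distrib_left sum_distrib_right mult_single)
qed

lemma push_keys_mult:
  fixes p q :: "'a::monoid_add \<Rightarrow>\<^sub>0 'k::semiring_0"
  assumes hom: "\<And>u v. f (u + v) = f u + f v"
  shows "push_keys f (p * q) = push_keys f p * push_keys f q"
  by (simp add: times_poly_mapping_sum_single[of p q] push_keys_sum hom)
     (simp add: push_keys_def sum_distrib_left sum_distrib_right mult_single)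

section \<open>Embedding and dehomogenization\<close>

definition word_emb :: "'x word \<Rightarrow> 'x option word" where
  "word_emb w = (case w of Wd u \<Rightarrow> Wd (map Some u))"

fun word_strip :: "'x option word \<Rightarrow> 'x word" where
  "word_strip (Wd u) = Wd (concat (map (\<lambda>z. case z of None \<Rightarrow> [] | Some x \<Rightarrow> [x]) u))"

lemma word_emb_add: "word_emb (u + v) = word_emb u + word_emb v"
  by (cases u; cases v) (simp add: word_emb_def)

lemma word_strip_add: "word_strip (u + v) = word_strip u + word_strip v"
  by (cases u; cases v) simp

lemma word_strip_word_emb [simp]: "word_strip (word_emb w) = w"
proof (cases w)
  case (Wd u)
  then show ?thesis by (induction u arbitrary: w) (auto simp: word_emb_def)
qed

lemma word_emb_zero [simp]: "word_emb 0 = 0"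
  by (simp add: word_emb_def zero_word_def)

lemma word_strip_zero [simp]: "word_strip 0 = 0"
  by (simp add: zero_word_def)

lemma wlen_word_emb [simp]: "wlen (word_emb w) = wlen w"
  by (cases w) (simp add: word_emb_def)

lemma wlen_add: "wlen (u + v) = wlen u + wlen v"
  by (cases u; cases v) simp

lemma emb_eq_push_keys: "emb p = push_keys word_emb p"
  by (simp add: emb_def push_keys_def word_emb_def)

lemma emb_zero [simp]: "emb 0 = 0"
  by (simp add: emb_eq_push_keys)

lemma emb_diff: "emb (p - q) = emb p - emb q"
  by (simp add: emb_eq_push_keys push_keys_diff)

lemma emb_mult: "emb (p * q) = emb p * emb q"
  by (simp add: emb_eq_push_keys push_keys_mult word_emb_add)

lemma emb_sum: "emb (\<Sum>j\<in>A. g j) = (\<Sum>j\<in>A. emb (g j))"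
  by (simp add: emb_eq_push_keys push_keys_sum)

lemma emb_single: "emb (Poly_Mapping.single w c) = Poly_Mapping.single (word_emb w) c"
  by (simp add: emb_eq_push_keys)

text \<open>The letter \<open>t\<close> is \<open>None\<close>, so erasing it from words is the substitution \<open>t \<mapsto> 1\<close>.\<close>

definition dehom :: "('x option, 'k::ring_1) ncpoly \<Rightarrow> ('x, 'k) ncpoly" where
  "dehom = push_keys word_strip"

lemma dehom_zero [simp]: "dehom 0 = 0"
  by (simp add: dehom_def)

lemma dehom_add: "dehom (p + q) = dehom p + dehom q"
  by (simp add: dehom_def push_keys_add)

lemma dehom_diff: "dehom (p - q) = dehom p - dehom q"
  by (simp add: dehom_def push_keys_diff)

lemma dehom_uminus: "dehom (- p) = - dehom p"
  by (simp add: dehom_def push_keys_uminus)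

lemma dehom_mult: "dehom (p * q) = dehom p * dehom q"
  by (simp add: dehom_def push_keys_mult word_strip_add)

lemma dehom_sum: "dehom (\<Sum>j\<in>A. g j) = (\<Sum>j\<in>A. dehom (g j))"
  by (simp add: dehom_def push_keys_sum)

lemma dehom_emb [simp]: "dehom (emb p) = p"
proof -
  have inv: "word_strip \<circ> word_emb = id" by auto
  show ?thesis by (simp only: dehom_def emb_eq_push_keys push_keys_comp inv push_keys_id)
qed

lemma dehom_tpow [simp]: "dehom (tpow k) = 1"
  by (simp add: dehom_def tpow_def flip: zero_word_def)

lemma dehom_tpow_emb [simp]: "dehom (tpow k * emb p) = p"
  by (simp add: dehom_mult)

lemma smult_tpow_emb:
  "smult c (tpow k * emb p) = tpow k * emb (smult c (p :: ('x, 'k::ring_1) ncpoly))"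
proof -
  have "smult c (tpow k * emb p) = (Poly_Mapping.single 0 c * tpow k) * emb p"
    by (simp add: smult_def mult.assoc)
  also have "Poly_Mapping.single 0 c * tpow k = tpow k * Poly_Mapping.single 0 c"
    by (simp add: tpow_def mult_single)
  finally show ?thesis
    by (simp add: smult_def emb_mult emb_single mult.assoc)
qed

lemma lookup_hcomp:
  "Poly_Mapping.lookup (hcomp d p) w = (if wlen w = d then Poly_Mapping.lookup p w else 0)"
proof -
  have "finite {w. (if wlen w = d then Poly_Mapping.lookup p w else 0) \<noteq> 0}"
    by (rule finite_subset[of _ "Poly_Mapping.keys p"]) (auto simp: in_keys_iff)
  then show ?thesis by (simp add: hcomp_def)
qed

lemma hcomp_zero [simp]: "hcomp d 0 = 0"
  by (rule poly_mapping_eqI) (simp add: lookup_hcomp)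

lemma hcomp_add: "hcomp d (p + q) = hcomp d p + hcomp d q"
  by (rule poly_mapping_eqI) (simp add: lookup_hcomp lookup_add)

lemma hcomp_diff: "hcomp d (p - q) = hcomp d p - hcomp d (q :: ('x, 'k::ab_group_add) ncpoly)"
  by (rule poly_mapping_eqI) (simp add: lookup_hcomp lookup_minus)

lemma hcomp_sum: "hcomp d (\<Sum>j\<in>A. g j) = (\<Sum>j\<in>A. hcomp d (g j))"
  by (induction A rule: infinite_finite_induct) (auto simp: hcomp_add)

lemma hcomp_single:
  "hcomp d (Poly_Mapping.single u c) = (if wlen u = d then Poly_Mapping.single u c else 0)"
  by (rule poly_mapping_eqI) (simp add: lookup_hcomp lookup_single when_def)

lemma hom_hcomp: "hom d (hcomp d p)"
  unfolding hom_def by (auto simp: in_keys_iff lookup_hcomp split: if_splits)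

lemma hom_zero [simp]: "hom d 0"
  by (simp add: hom_def)

lemma hom_mult: "hom a p \<Longrightarrow> hom b q \<Longrightarrow> hom (a + b) (p * q)"
  unfolding hom_def using keys_mult[of p q] by (auto simp: wlen_add)

lemma hcomp_eq_0_if_hom: "hom e p \<Longrightarrow> d \<noteq> e \<Longrightarrow> hcomp d p = 0"
  unfolding hom_def by (rule poly_mapping_eqI) (auto simp: lookup_hcomp in_keys_iff)

lemma diff_hcomp_eq_sum:
  "p - hcomp e p = (\<Sum>d\<in>wlen ` Poly_Mapping.keys p - {e}. hcomp d (p :: ('x, 'k::ab_group_add) ncpoly))"
proof (rule poly_mapping_eqI)
  fix w
  have "w \<notin> Poly_Mapping.keys p \<Longrightarrow> Poly_Mapping.lookup p w = 0"
    by (simp add: in_keys_iff)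
  then show "Poly_Mapping.lookup (p - hcomp e p) w
      = Poly_Mapping.lookup (\<Sum>d\<in>wlen ` Poly_Mapping.keys p - {e}. hcomp d p) w"
    by (auto simp: lookup_sum lookup_minus lookup_hcomp)
qed

lemma hcomp_single_mult_single:
  "hcomp m (Poly_Mapping.single (u + v) (a * b)) =
   (\<Sum>k\<le>m. hcomp k (Poly_Mapping.single u a) * hcomp (m - k) (Poly_Mapping.single v (b::'k::semiring_0)))"
proof (cases "wlen u + wlen v = m")
  case True
  then have "(\<Sum>k\<le>m. hcomp k (Poly_Mapping.single u a) * hcomp (m - k) (Poly_Mapping.single v b))
      = (\<Sum>k\<le>m. if k = wlen u then Poly_Mapping.single (u + v) (a * b) else 0)"
    by (intro sum.cong) (auto simp: hcomp_single mult_single)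
  with True show ?thesis by (simp add: hcomp_single wlen_add)
next
  case False
  then show ?thesis
    by (auto simp: hcomp_single wlen_add intro!: sum.neutral)
qed

lemma hcomp_mult:
  "hcomp m (p * q) = (\<Sum>k\<le>m. hcomp k p * hcomp (m - k) (q :: ('x, 'k::semiring_0) ncpoly))"
proof -
  let ?P = "\<lambda>u. Poly_Mapping.single u (Poly_Mapping.lookup p u)"
  let ?Q = "\<lambda>v. Poly_Mapping.single v (Poly_Mapping.lookup q v)"
  have "hcomp m (p * q) = (\<Sum>v\<in>Poly_Mapping.keys q. \<Sum>u\<in>Poly_Mapping.keys p. \<Sum>k\<le>m.
      hcomp k (?P u) * hcomp (m - k) (?Q v))"
    by (simp add: times_poly_mapping_sum_single[of p q] hcomp_sum hcomp_single_mult_single)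
  also have "\<dots> = (\<Sum>k\<le>m. \<Sum>v\<in>Poly_Mapping.keys q. \<Sum>u\<in>Poly_Mapping.keys p.
      hcomp k (?P u) * hcomp (m - k) (?Q v))"
    by (simp only: sum.swap[of _ "{..m}"])
  also have "\<dots> = (\<Sum>k\<le>m. (\<Sum>u\<in>Poly_Mapping.keys p. hcomp k (?P u))
      * (\<Sum>v\<in>Poly_Mapping.keys q. hcomp (m - k) (?Q v)))"
    by (simp only: sum_distrib_left sum_distrib_right sum.swap[of _ "Poly_Mapping.keys p"])
  also have "\<dots> = (\<Sum>k\<le>m. hcomp k p * hcomp (m - k) q)"
    by (simp flip: hcomp_sum poly_mapping_sum_single)
  finally show ?thesis .
qed

lemma hcomp_emb: "hcomp m (emb p) = emb (hcomp m p)"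
proof -
  have "hcomp m (emb p) = (\<Sum>w\<in>Poly_Mapping.keys p.
      hcomp m (Poly_Mapping.single (word_emb w) (Poly_Mapping.lookup p w)))"
    by (simp add: emb_eq_push_keys push_keys_def hcomp_sum)
  also have "\<dots> = emb (\<Sum>w\<in>Poly_Mapping.keys p. hcomp m (Poly_Mapping.single w (Poly_Mapping.lookup p w)))"
    by (auto simp: emb_sum hcomp_single emb_single intro!: sum.cong)
  also have "\<dots> = emb (hcomp m p)"
    by (simp flip: hcomp_sum poly_mapping_sum_single)
  finally show ?thesis .
qed

lemma hom_emb: "hom d p \<Longrightarrow> hom d (emb p)"
  unfolding hom_def emb_eq_push_keys using keys_push_keys[of word_emb p] by auto

lemma hom_tpow: "hom k (tpow k)"
  by (simp add: hom_def tpow_def)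

lemma twosided_ideal_0: "twosided_ideal J \<Longrightarrow> 0 \<in> J"
  by (simp add: twosided_ideal_def)

lemma twosided_ideal_add: "twosided_ideal J \<Longrightarrow> p \<in> J \<Longrightarrow> q \<in> J \<Longrightarrow> p + q \<in> J"
  by (simp add: twosided_ideal_def)

lemma twosided_ideal_uminus: "twosided_ideal J \<Longrightarrow> p \<in> J \<Longrightarrow> - p \<in> J"
  by (simp add: twosided_ideal_def)

lemma twosided_ideal_diff: "twosided_ideal J \<Longrightarrow> p \<in> J \<Longrightarrow> q \<in> J \<Longrightarrow> p - q \<in> J"
  by (metis diff_conv_add_uminus twosided_ideal_add twosided_ideal_uminus)

lemma twosided_ideal_mult: "twosided_ideal J \<Longrightarrow> p \<in> J \<Longrightarrow> a * p * b \<in> J"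
  by (simp add: twosided_ideal_def)

lemma twosided_ideal_mult_left: "twosided_ideal J \<Longrightarrow> p \<in> J \<Longrightarrow> a * p \<in> J"
  by (metis twosided_ideal_mult mult_1_right)

lemma twosided_ideal_mult_right: "twosided_ideal J \<Longrightarrow> p \<in> J \<Longrightarrow> p * b \<in> J"
  by (metis twosided_ideal_mult mult_1_left)

lemma twosided_ideal_sum:
  "twosided_ideal J \<Longrightarrow> (\<And>j. j \<in> A \<Longrightarrow> f j \<in> J) \<Longrightarrow> (\<Sum>j\<in>A. f j) \<in> J"
  by (induction A rule: infinite_finite_induct) (auto simp: twosided_ideal_0 twosided_ideal_add)

lemma twosided_ideal_gen_ideal: "twosided_ideal (gen_ideal S)"
  unfolding gen_ideal_def twosided_ideal_def by auto

lemma gen_ideal_superset: "S \<subseteq> gen_ideal S"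
  unfolding gen_ideal_def by auto

lemma gen_ideal_least: "twosided_ideal J \<Longrightarrow> S \<subseteq> J \<Longrightarrow> gen_ideal S \<subseteq> J"
  unfolding gen_ideal_def by auto

lemma dehom_mem_ideal:
  assumes I: "twosided_ideal I" and p: "p \<in> gen_ideal (emb ` I)"
  shows "dehom p \<in> I"
proof -
  have "twosided_ideal {p. dehom p \<in> I}"
    using I unfolding twosided_ideal_def by (simp add: dehom_add dehom_uminus dehom_mult)
  then have "gen_ideal (emb ` I) \<subseteq> {p. dehom p \<in> I}"
    by (rule gen_ideal_least) auto
  with p show ?thesis by auto
qed

lemma tpow_emb_mem_gen_ideal_iff:
  assumes I: "twosided_ideal I"
  shows "tpow c * emb p \<in> gen_ideal (emb ` I) \<longleftrightarrow> p \<in> I"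
proof
  assume "tpow c * emb p \<in> gen_ideal (emb ` I)"
  then show "p \<in> I"
    using dehom_mem_ideal[OF I] by fastforce
next
  assume "p \<in> I"
  then have "emb p \<in> gen_ideal (emb ` I)"
    using gen_ideal_superset by blast
  then show "tpow c * emb p \<in> gen_ideal (emb ` I)"
    by (rule twosided_ideal_mult_left[OF twosided_ideal_gen_ideal])
qed

definition dehom_part :: "nat \<Rightarrow> ('x option, 'k::ring_1) ncpoly \<Rightarrow> ('x, 'k) ncpoly" where
  "dehom_part m p = dehom (hcomp m p)"

lemma dehom_part_zero [simp]: "dehom_part m 0 = 0"
  by (simp add: dehom_part_def)

lemma dehom_part_add: "dehom_part m (p + q) = dehom_part m p + dehom_part m q"
  by (simp add: dehom_part_def hcomp_add dehom_add)

lemma dehom_part_diff: "dehom_part m (p - q) = dehom_part m p - dehom_part m q"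
  by (simp add: dehom_part_def hcomp_diff dehom_diff)

lemma dehom_part_uminus: "dehom_part m (- p) = - dehom_part m p"
  by (metis diff_0 dehom_part_diff dehom_part_zero)

lemma dehom_part_mult: "dehom_part m (p * q) = (\<Sum>k\<le>m. dehom_part k p * dehom_part (m - k) q)"
  by (simp add: dehom_part_def hcomp_mult dehom_sum dehom_mult)

lemma dehom_part_emb: "dehom_part m (emb p) = hcomp m p"
  by (simp add: dehom_part_def hcomp_emb)

lemma dehom_part_tpow_emb:
  fixes p :: "('x, 'k::ring_1) ncpoly"
  shows "dehom_part (c + k) (tpow c * emb p) = hcomp k p"
proof -
  have tpow: "dehom_part l (tpow c :: ('x option, 'k::ring_1) ncpoly) = (if l = c then 1 else 0)" for l
    by (simp add: dehom_part_def tpow_def hcomp_single) (metis dehom_tpow tpow_def)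
  show ?thesis
    unfolding dehom_part_mult tpow dehom_part_emb by (simp add: of_bool_def[symmetric])
qed

lemma dehom_part_mem_ideal:
  assumes I: "graded_ideal I" and p: "p \<in> gen_ideal (emb ` I)"
  shows "dehom_part m p \<in> I"
proof -
  have I_ideal: "twosided_ideal I" using I by (simp add: graded_ideal_def)
  let ?K = "{p. \<forall>m. dehom_part m p \<in> I}"
  have "dehom_part m (a * p * b) \<in> I" if "p \<in> ?K" for a p b m
  proof -
    have "dehom_part m (a * p * b)
        = (\<Sum>k\<le>m. \<Sum>l\<le>k. dehom_part l a * dehom_part (k - l) p * dehom_part (m - k) b)"
      by (simp add: dehom_part_mult sum_distrib_right)
    also have "\<dots> \<in> I"
      using that by (auto intro!: twosided_ideal_sum[OF I_ideal] twosided_ideal_mult[OF I_ideal])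
    finally show ?thesis .
  qed
  then have "twosided_ideal ?K"
    using I_ideal unfolding twosided_ideal_def by (simp add: dehom_part_add dehom_part_uminus)
  moreover have "emb ` I \<subseteq> ?K"
    using I by (auto simp: dehom_part_emb graded_ideal_def)
  ultimately have "gen_ideal (emb ` I) \<subseteq> ?K" by (rule gen_ideal_least)
  with p show ?thesis by auto
qed

section \<open>Quotient modules and the map \<open>\<eta>\<close>\<close>

lemma qv_self: "twosided_ideal J \<Longrightarrow> v \<in> qv J v"
  by (simp add: qv_def twosided_ideal_0)

lemma qv_eq_iff:
  assumes J: "twosided_ideal J"
  shows "qv J v = qv J w \<longleftrightarrow> (\<forall>i. v i - w i \<in> J)"
proof
  assume "qv J v = qv J w"
  then have "v \<in> qv J w" using qv_self[OF J] by metis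
  then show "\<forall>i. v i - w i \<in> J" by (simp add: qv_def)
next
  assume vw: "\<forall>i. v i - w i \<in> J"
  have "x i - v i \<in> J \<longleftrightarrow> x i - w i \<in> J" for x i
  proof -
    have "x i - w i = (x i - v i) + (v i - w i)" by simp
    then show ?thesis
      using vw twosided_ideal_add[OF J] twosided_ideal_diff[OF J] by (metis add_diff_cancel)
  qed
  then show "qv J v = qv J w" by (auto simp: qv_def)
qed

lemma qadd_qv:
  assumes J: "twosided_ideal J"
  shows "qadd J (qv J x) (qv J y) = qv J (\<lambda>i. x i + y i)"
proof -
  have "qv J (\<lambda>i. x' i + y' i) = qv J (\<lambda>i. x i + y i)" if "x' \<in> qv J x" "y' \<in> qv J y" for x' y'
    unfolding qv_eq_iff[OF J] using that twosided_ideal_add[OF J] by (simp add: qv_def add_diff_add)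
  then show ?thesis
    unfolding qadd_def using qv_self[OF J] by blast
qed

lemma qrmult_qv:
  assumes J: "twosided_ideal J"
  shows "qrmult J (qv J x) p = qv J (\<lambda>i. x i * p)"
proof -
  have "qv J (\<lambda>i. x' i * p) = qv J (\<lambda>i. x i * p)" if "x' \<in> qv J x" for x'
    unfolding qv_eq_iff[OF J] using that twosided_ideal_mult_right[OF J]
    by (simp add: qv_def flip: left_diff_distrib)
  then show ?thesis
    unfolding qrmult_def using qv_self[OF J] by blast
qed

lemma eta_qv:
  assumes I: "twosided_ideal I"
  shows "eta I \<delta> \<delta>' (qv I x) = qv (gen_ideal (emb ` I)) (\<lambda>i. tpow (\<delta> i - \<delta>' i) * emb (x i))"
proof -
  let ?J = "gen_ideal (emb ` I)"
  have "qv ?J (\<lambda>i. tpow (\<delta> i - \<delta>' i) * emb (y i)) = qv ?J (\<lambda>i. tpow (\<delta> i - \<delta>' i) * emb (x i))"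
    if "y \<in> qv I x" for y
    unfolding qv_eq_iff[OF twosided_ideal_gen_ideal] using that
    by (simp add: qv_def tpow_emb_mem_gen_ideal_iff[OF I] flip: right_diff_distrib emb_diff)
  then show ?thesis
    unfolding eta_def using qv_self[OF I] by blast
qed

lemma gen_rsubmod_superset: "S \<subseteq> gen_rsubmod J S"
  unfolding gen_rsubmod_def by auto

lemma gen_rsubmod_least: "rsubmod J N \<Longrightarrow> S \<subseteq> N \<Longrightarrow> gen_rsubmod J S \<subseteq> N"
  unfolding gen_rsubmod_def by auto

lemma qv_dehom_eq:
  assumes I: "twosided_ideal I"
    and "qv (gen_ideal (emb ` I)) y = qv (gen_ideal (emb ` I)) y'"
  shows "qv I (\<lambda>i. dehom (y i)) = qv I (\<lambda>i. dehom (y' i))"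
  using assms dehom_mem_ideal[OF I]
  by (simp add: qv_eq_iff[OF I] qv_eq_iff[OF twosided_ideal_gen_ideal] flip: dehom_diff)

lemma rsubmod_dehom_preimage:
  assumes I: "twosided_ideal I" and M: "rsubmod I M"
  shows "rsubmod (gen_ideal (emb ` I)) {qv (gen_ideal (emb ` I)) y | y. qv I (\<lambda>i. dehom (y i)) \<in> M}"
    (is "rsubmod ?J ?N")
proof -
  have J: "twosided_ideal ?J" by (rule twosided_ideal_gen_ideal)
  have "qadd ?J (qv ?J x) (qv ?J y) \<in> ?N"
    if "qv I (\<lambda>i. dehom (x i)) \<in> M" "qv I (\<lambda>i. dehom (y i)) \<in> M" for x y
  proof -
    have "qadd I (qv I (\<lambda>i. dehom (x i))) (qv I (\<lambda>i. dehom (y i))) \<in> M"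
      using M that by (simp add: rsubmod_def)
    then show ?thesis by (auto simp: qadd_qv[OF I] qadd_qv[OF J] dehom_add)
  qed
  moreover have "qrmult ?J (qv ?J x) p \<in> ?N" if "qv I (\<lambda>i. dehom (x i)) \<in> M" for x p
  proof -
    have "qrmult I (qv I (\<lambda>i. dehom (x i))) (dehom p) \<in> M"
      using M that by (simp add: rsubmod_def)
    then show ?thesis by (auto simp: qrmult_qv[OF I] qrmult_qv[OF J] dehom_mult)
  qed
  moreover have "qv ?J (\<lambda>i. 0) \<in> ?N"
    using M by (auto simp: rsubmod_def)
  ultimately show ?thesis
    unfolding rsubmod_def by blast
qed

theorem eta_image_eq_Hhom_inter_tA:
  assumes I: "twosided_ideal I" and M: "rsubmod I M"
  shows "eta I \<delta> \<delta>' ` M = Hhom I \<delta> \<delta>' M \<inter> tA I \<delta> \<delta>'"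
proof
  let ?J = "gen_ideal (emb ` I)"
  let ?N = "{qv ?J y | y. qv I (\<lambda>i. dehom (y i)) \<in> M}"
  have eta_in: "eta I \<delta> \<delta>' X \<in> tA I \<delta> \<delta>' \<and> eta I \<delta> \<delta>' X \<in> ?N" if X: "X \<in> M" for X
  proof -
    obtain x where x: "X = qv I x"
      using M X by (auto simp: rsubmod_def)
    then have eta_X: "eta I \<delta> \<delta>' X = qv ?J (\<lambda>i. tpow (\<delta> i - \<delta>' i) * emb (x i))"
      by (simp add: eta_qv[OF I])
    have "qv I (\<lambda>i. dehom (tpow (\<delta> i - \<delta>' i) * emb (x i))) \<in> M"
      using X x by simp
    then show ?thesis
      unfolding eta_X tA_def by blast
  qed
  have "eta I \<delta> \<delta>' ` M \<subseteq> Hhom I \<delta> \<delta>' M"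
    unfolding Hhom_def by (rule gen_rsubmod_superset)
  with eta_in show "eta I \<delta> \<delta>' ` M \<subseteq> Hhom I \<delta> \<delta>' M \<inter> tA I \<delta> \<delta>'"
    by blast
  have "eta I \<delta> \<delta>' ` M \<subseteq> ?N"
    using eta_in by blast
  then have HN: "Hhom I \<delta> \<delta>' M \<subseteq> ?N"
    unfolding Hhom_def by (rule gen_rsubmod_least[OF rsubmod_dehom_preimage[OF I M]])
  show "Hhom I \<delta> \<delta>' M \<inter> tA I \<delta> \<delta>' \<subseteq> eta I \<delta> \<delta>' ` M"
  proof
    fix Z assume Z: "Z \<in> Hhom I \<delta> \<delta>' M \<inter> tA I \<delta> \<delta>'"
    then obtain a where a: "Z = qv ?J (\<lambda>i. tpow (\<delta> i - \<delta>' i) * emb (a i))"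
      unfolding tA_def by blast
    from Z HN obtain y where "Z = qv ?J y" "qv I (\<lambda>i. dehom (y i)) \<in> M"
      by blast
    with a have "qv I a \<in> M"
      using qv_dehom_eq[OF I, of y "\<lambda>i. tpow (\<delta> i - \<delta>' i) * emb (a i)"] by simp
    moreover have "Z = eta I \<delta> \<delta>' (qv I a)"
      using a by (simp add: eta_qv[OF I])
    ultimately show "Z \<in> eta I \<delta> \<delta>' ` M"
      by (rule rev_image_eqI)
  qed
qed

lemma homv_eta:
  assumes v: "homv \<delta> d v" and le: "\<And>i. \<delta>' i \<le> \<delta> i"
  shows "homv \<delta>' d (\<lambda>i. tpow (\<delta> i - \<delta>' i) * emb (v i))"
  unfolding homv_def
proof
  fix i
  show "if \<delta>' i \<le> d then hom (d - \<delta>' i) (tpow (\<delta> i - \<delta>' i) * emb (v i))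
    else tpow (\<delta> i - \<delta>' i) * emb (v i) = 0"
  proof (cases "\<delta> i \<le> d")
    case True
    then have "hom ((\<delta> i - \<delta>' i) + (d - \<delta> i)) (tpow (\<delta> i - \<delta>' i) * emb (v i))"
      using v by (intro hom_mult hom_tpow hom_emb) (simp add: homv_def)
    moreover have "(\<delta> i - \<delta>' i) + (d - \<delta> i) = d - \<delta>' i"
      using True le[of i] by simp
    ultimately show ?thesis using True le[of i] by simp
  next
    case False
    then show ?thesis using v by (simp add: homv_def)
  qed
qed

lemma diff_hcomp_mem_ideal:
  assumes "twosided_ideal I" and "\<And>d. d \<noteq> e \<Longrightarrow> hcomp d p \<in> I"
  shows "p - hcomp e p \<in> I"
  unfolding diff_hcomp_eq_sum using assms by (auto intro: twosided_ideal_sum)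

text \<open>A homogeneous component of \<open>x\<close> of the wrong degree is the dehomogenized component of
  \<open>\<eta>(x) - w \<in> Ibar\<close> of the corresponding degree, hence lies in \<open>I\<close>.\<close>

lemma homv_rep_of_eta:
  assumes I: "graded_ideal I" and le: "\<And>i. \<delta>' i \<le> \<delta> i"
    and eta: "eta I \<delta> \<delta>' (qv I x) = qv (gen_ideal (emb ` I)) w" and w: "homv \<delta>' d w"
  shows "\<exists>v. homv \<delta> d v \<and> qv I x = qv I v"
proof -
  have I_ideal: "twosided_ideal I" using I by (simp add: graded_ideal_def)
  define v where "v i = (if \<delta> i \<le> d then hcomp (d - \<delta> i) (x i) else 0)" for i
  have diff: "tpow (\<delta> i - \<delta>' i) * emb (x i) - w i \<in> gen_ideal (emb ` I)" for i
    using eta by (simp add: eta_qv[OF I_ideal] qv_eq_iff[OF twosided_ideal_gen_ideal])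
  have hcomp_I: "hcomp k (x i) \<in> I" if "\<not> (\<delta> i \<le> d \<and> k = d - \<delta> i)" for i k
  proof -
    have "hcomp (\<delta> i - \<delta>' i + k) (w i) = 0"
    proof (cases "\<delta>' i \<le> d")
      case True
      then have "hom (d - \<delta>' i) (w i)" using w by (simp add: homv_def)
      then show ?thesis using True that le[of i] by (intro hcomp_eq_0_if_hom) auto
    next
      case False
      then show ?thesis using w by (simp add: homv_def)
    qed
    then have "dehom_part (\<delta> i - \<delta>' i + k) (w i) = 0"
      by (simp add: dehom_part_def)
    then show ?thesis
      using dehom_part_mem_ideal[OF I diff, of "\<delta> i - \<delta>' i + k" i]
      by (simp add: dehom_part_diff dehom_part_tpow_emb)
  qed
  have "x i - v i \<in> I" for i
  proof (cases "\<delta> i \<le> d")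
    case True
    then show ?thesis
      using diff_hcomp_mem_ideal[OF I_ideal] hcomp_I by (simp add: v_def)
  next
    case False
    then have "x i - v i = (x i - hcomp 0 (x i)) + hcomp 0 (x i)"
      by (simp add: v_def)
    also have "\<dots> \<in> I"
      using False hcomp_I by (intro twosided_ideal_add[OF I_ideal] diff_hcomp_mem_ideal[OF I_ideal]) auto
    finally show ?thesis .
  qed
  moreover have "homv \<delta> d v"
    unfolding homv_def v_def by (auto simp: hom_hcomp)
  ultimately show ?thesis
    by (auto simp: qv_eq_iff[OF I_ideal])
qed

lemma hpart_eta_image:
  assumes I: "graded_ideal I" and M: "M \<subseteq> range (qv I)" and le: "\<And>i. \<delta>' i \<le> \<delta> i"
  shows "hpart (gen_ideal (emb ` I)) \<delta>' d (eta I \<delta> \<delta>' ` M) = eta I \<delta> \<delta>' ` hpart I \<delta> d M"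
proof -
  have I_ideal: "twosided_ideal I" using I by (simp add: graded_ideal_def)
  have "(\<exists>w. homv \<delta>' d w \<and> eta I \<delta> \<delta>' X = qv (gen_ideal (emb ` I)) w)
      \<longleftrightarrow> (\<exists>v. homv \<delta> d v \<and> X = qv I v)" if "X \<in> M" for X
  proof -
    obtain x where x: "X = qv I x" using M \<open>X \<in> M\<close> by blast
    show ?thesis
    proof
      assume "\<exists>w. homv \<delta>' d w \<and> eta I \<delta> \<delta>' X = qv (gen_ideal (emb ` I)) w"
      then show "\<exists>v. homv \<delta> d v \<and> X = qv I v"
        using homv_rep_of_eta[where \<delta>=\<delta> and \<delta>'=\<delta>', OF I le] x by blast
    next
      assume "\<exists>v. homv \<delta> d v \<and> X = qv I v"
      then obtain v where v: "homv \<delta> d v" "X = qv I v" by blast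
      then show "\<exists>w. homv \<delta>' d w \<and> eta I \<delta> \<delta>' X = qv (gen_ideal (emb ` I)) w"
        using homv_eta[OF v(1) le] eta_qv[OF I_ideal, of \<delta> \<delta>' v] by auto
    qed
  qed
  then show ?thesis
    unfolding hpart_def by blast
qed

section \<open>Linear independence and dimension\<close>

lemma smult_diff: "smult c (p - q) = smult c p - smult c q"
  by (simp add: smult_def right_diff_distrib)

lemma twosided_ideal_smult: "twosided_ideal J \<Longrightarrow> p \<in> J \<Longrightarrow> smult c p \<in> J"
  by (simp add: smult_def twosided_ideal_mult_left)

lemma twosided_ideal_mem_iff_diff:
  assumes J: "twosided_ideal J" and pq: "p - q \<in> J"
  shows "p \<in> J \<longleftrightarrow> q \<in> J"
proof -
  have "p = (p - q) + q" "q = p - (p - q)" by simp_all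
  then show ?thesis
    using twosided_ideal_add[OF J pq] twosided_ideal_diff[OF J _ pq] by metis
qed

lemma qindep_iff_reps:
  assumes J: "twosided_ideal J" and X: "\<And>j. j < k \<Longrightarrow> Xs j = qv J (x j)"
  shows "qindep J Xs k \<longleftrightarrow> (\<forall>c. (\<forall>i. (\<Sum>j<k. smult (c j) (x j i)) \<in> J) \<longrightarrow> (\<forall>j<k. c j = 0))"
proof -
  have reps: "qv J (\<lambda>i. \<Sum>j<k. smult (c j) (y j i)) = qv J (\<lambda>i. 0)
      \<longleftrightarrow> (\<forall>i. (\<Sum>j<k. smult (c j) (x j i)) \<in> J)" if y: "\<forall>j<k. y j \<in> Xs j" for y c
  proof -
    have "(\<Sum>j<k. smult (c j) (y j i)) - (\<Sum>j<k. smult (c j) (x j i)) \<in> J" for i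
    proof -
      have "(\<Sum>j<k. smult (c j) (y j i)) - (\<Sum>j<k. smult (c j) (x j i))
          = (\<Sum>j<k. smult (c j) (y j i - x j i))"
        by (simp add: smult_diff sum_subtractf)
      also have "\<dots> \<in> J"
        using X y by (intro twosided_ideal_sum[OF J] twosided_ideal_smult[OF J]) (auto simp: qv_def)
      finally show ?thesis .
    qed
    then show ?thesis
      unfolding qv_eq_iff[OF J] diff_zero using twosided_ideal_mem_iff_diff[OF J] by blast
  qed
  have x: "\<forall>j<k. x j \<in> Xs j"
    using X qv_self[OF J] by auto
  show ?thesis
  proof
    assume "qindep J Xs k"
    then show "\<forall>c. (\<forall>i. (\<Sum>j<k. smult (c j) (x j i)) \<in> J) \<longrightarrow> (\<forall>j<k. c j = 0)"
      unfolding qindep_def using reps[OF x] x by blast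
  next
    assume "\<forall>c. (\<forall>i. (\<Sum>j<k. smult (c j) (x j i)) \<in> J) \<longrightarrow> (\<forall>j<k. c j = 0)"
    then show "qindep J Xs k"
      unfolding qindep_def using reps by blast
  qed
qed

lemma sum_smult_tpow_emb:
  "(\<Sum>j\<in>A. smult (c j) (tpow m * emb (x j))) = tpow m * emb (\<Sum>j\<in>A. smult (c j) (x j))"
  by (simp add: smult_tpow_emb emb_sum sum_distrib_left)

lemma qindep_eta_iff:
  assumes I: "twosided_ideal I"
    and X: "\<And>j. j < k \<Longrightarrow> Xs j = qv I (x j)"
    and Y: "\<And>j. j < k \<Longrightarrow> Ys j = eta I \<delta> \<delta>' (Xs j)"
  shows "qindep (gen_ideal (emb ` I)) Ys k \<longleftrightarrow> qindep I Xs k"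
proof -
  have "Ys j = qv (gen_ideal (emb ` I)) (\<lambda>i. tpow (\<delta> i - \<delta>' i) * emb (x j i))" if "j < k" for j
    using that X Y by (simp add: eta_qv[OF I])
  then show ?thesis
    by (simp add: qindep_iff_reps[OF twosided_ideal_gen_ideal] qindep_iff_reps[OF I X]
        sum_smult_tpow_emb tpow_emb_mem_gen_ideal_iff[OF I])
qed

lemma qdim_eta_image:
  assumes I: "twosided_ideal I" and S: "S \<subseteq> range (qv I)"
  shows "qdim (gen_ideal (emb ` I)) (eta I \<delta> \<delta>' ` S) = qdim I S"
proof -
  let ?J = "gen_ideal (emb ` I)"
  have "(\<exists>Ys. (\<forall>j<k. Ys j \<in> eta I \<delta> \<delta>' ` S) \<and> qindep ?J Ys k)
      \<longleftrightarrow> (\<exists>Xs. (\<forall>j<k. Xs j \<in> S) \<and> qindep I Xs k)" for k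
  proof
    assume "\<exists>Ys. (\<forall>j<k. Ys j \<in> eta I \<delta> \<delta>' ` S) \<and> qindep ?J Ys k"
    then obtain Ys where Ys: "\<And>j. j < k \<Longrightarrow> Ys j \<in> eta I \<delta> \<delta>' ` S" "qindep ?J Ys k"
      by blast
    have "\<exists>x. qv I x \<in> S \<and> Ys j = eta I \<delta> \<delta>' (qv I x)" if "j < k" for j
      using Ys(1)[OF that] S by blast
    then obtain x where x: "\<And>j. j < k \<Longrightarrow> qv I (x j) \<in> S \<and> Ys j = eta I \<delta> \<delta>' (qv I (x j))"
      by metis
    have "qindep I (\<lambda>j. qv I (x j)) k"
      using Ys(2) qindep_eta_iff[OF I, of k "\<lambda>j. qv I (x j)" x Ys] x by blast
    with x show "\<exists>Xs. (\<forall>j<k. Xs j \<in> S) \<and> qindep I Xs k"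
      by (intro exI[of _ "\<lambda>j. qv I (x j)"]) simp
  next
    assume "\<exists>Xs. (\<forall>j<k. Xs j \<in> S) \<and> qindep I Xs k"
    then obtain Xs where Xs: "\<And>j. j < k \<Longrightarrow> Xs j \<in> S" "qindep I Xs k"
      by blast
    have "\<exists>x. Xs j = qv I x" if "j < k" for j
      using Xs(1)[OF that] S by blast
    then obtain x where "\<And>j. j < k \<Longrightarrow> Xs j = qv I (x j)"
      by metis
    then have "qindep ?J (\<lambda>j. eta I \<delta> \<delta>' (Xs j)) k"
      using Xs(2) qindep_eta_iff[OF I, of k Xs x "\<lambda>j. eta I \<delta> \<delta>' (Xs j)"] by blast
    with Xs(1) show "\<exists>Ys. (\<forall>j<k. Ys j \<in> eta I \<delta> \<delta>' ` S) \<and> qindep ?J Ys k"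
      by (intro exI[of _ "\<lambda>j. eta I \<delta> \<delta>' (Xs j)"]) simp
  qed
  then show ?thesis
    unfolding qdim_def by simp
qed

theorem mainTheorem1:
  fixes I :: "('x::finite, 'k::field) ncpoly set"
    and \<delta> \<delta>' :: "'r::finite \<Rightarrow> nat"
    and M :: "('r \<Rightarrow> ('x, 'k) ncpoly) set set"
  assumes "graded_ideal I"
    and "graded_rsubmod I \<delta> M"
    and "\<And>i. \<delta>' i \<le> \<delta> i"
  shows "eta I \<delta> \<delta>' ` M = Hhom I \<delta> \<delta>' M \<inter> tA I \<delta> \<delta>'
    \<and> (\<forall>d. qdim I (hpart I \<delta> d M)
           = qdim (gen_ideal (emb ` I)) (hpart (gen_ideal (emb ` I)) \<delta>' d (Hhom I \<delta> \<delta>' M \<inter> tA I \<delta> \<delta>')))"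
proof -
  have I: "twosided_ideal I"
    using assms(1) by (simp add: graded_ideal_def)
  have M: "rsubmod I M"
    using assms(2) by (simp add: graded_rsubmod_def)
  then have M_qv: "M \<subseteq> range (qv I)" and hpart_qv: "hpart I \<delta> d M \<subseteq> range (qv I)" for d
    by (auto simp: rsubmod_def hpart_def)
  have eta_M: "eta I \<delta> \<delta>' ` M = Hhom I \<delta> \<delta>' M \<inter> tA I \<delta> \<delta>'"
    using I M by (rule eta_image_eq_Hhom_inter_tA)
  have "qdim (gen_ideal (emb ` I)) (hpart (gen_ideal (emb ` I)) \<delta>' d (eta I \<delta> \<delta>' ` M))
      = qdim I (hpart I \<delta> d M)" for d
    by (simp add: hpart_eta_image[OF assms(1) M_qv assms(3)] qdim_eta_image[OF I hpart_qv])
  with eta_M show ?thesis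
    by simp
qed

end
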